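(* Let $(E,\mathcal P)$ be a random locally convex module over $K$ with base $(\Omega,\mathcal F,P)$ such that $\mathcal F$ has at least one $P$-atom, and let $f:E\to L^0(\mathcal F,K)$ be a module homomorphism. Then $f\in E^\ast_{min}$ (i.e. $f$ is continuous from $(E,\mathcal T_{\varepsilon,\lambda})$ to $(L^0(\mathcal F,K),\mathcal T_c)$) if and only if there exist finitely many $P$-atoms $A_1,\dots,A_n$, elements $\xi_1,\dots,\xi_n\in L^0_+$ and $\mathcal Q_1,\dots,\mathcal Q_n\in\mathcal F(\mathcal P)$ such that $$|f(x)|\le\sum_{i=1}^{n}\tilde I_{A_i}\,\xi_i\,\|x\|_{\mathcal Q_i}\quad\text{for all }x\in E.$$
   Context: $(\Omega,\mathcal{F},P)$ is a probability space, $K=\mathbb{R}$ or $\mathbb{C}$, $L^{0}(\mathcal{F},K)$ is the algebra of equivalence classes (mod a.s. equality) of $K$-valued measurable random variables, ordered a.s.; $L^0_+$ the nonnegative ones, $L^0_{++}$ those $>0$ a.s.; $\tilde I_A$ is the class of the indicator of $A$. An $L^0$-seminorm on a left $L^0(\mathcal F,K)$-module $E$ is $\|\cdot\|:E\to L^0_+$ with $\|x+y\|\le\|x\|+\|y\|$ and $\|\xi x\|=|\xi|\|x\|$. A random locally convex module $(E,\mathcal P)$ is a left $L^0(\mathcal F,K)$-module with a family $\mathcal P$ of $L^0$-seminorms such that $\bigvee_{\|\cdot\|\in\mathcal P}\|x\|=0$ implies $x=0$. $\mathcal F(\mathcal P)$ is the set of finite subfamilies of $\mathcal P$, and $\|x\|_{\mathcal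 Q}=\bigvee_{\|\cdot\|\in\mathcal Q}\|x\|$. $\mathcal T_{\varepsilon,\lambda}$ on $E$ has local base at $0$ the sets $\{x:P\{\omega:\|x\|_{\mathcal Q}(\omega)<\varepsilon\}>1-\lambda\}$ ($\mathcal Q\in\mathcal F(\mathcal P)$, $\varepsilon>0$, $0<\lambda<1$). $\mathcal T_c$ on $E$: $G$ open iff for each $x\in G$ there are $\mathcal Q\in\mathcal F(\mathcal P)$, $\varepsilon\in L^0_{++}$ with $x+\{y:\|y\|_{\mathcal Q}\le\varepsilon\}\subset G$. $L^0(\mathcal F,K)$ is regarded as a random locally convex module with $\mathcal P=\{|\cdot|\}$. A $P$-atom is $A\in\mathcal F$ with $P(A)>0$ such that every measurable $B\subset A$ has $P(B)=0$ or $P(A\setminus B)=0$. *)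

theory Defs
  imports "HOL-Probability.Probability"
begin

text \<open>L0(F,K): represented by measurable K-valued functions; equality of classes is a.e. equality.\<close>

definition L0 :: "'a measure \<Rightarrow> ('a \<Rightarrow> 'k::real_normed_field) set" where
  "L0 M = borel_measurable M"

definition aeq :: "'a measure \<Rightarrow> ('a \<Rightarrow> 'b) \<Rightarrow> ('a \<Rightarrow> 'b) \<Rightarrow> bool" where
  "aeq M f g \<longleftrightarrow> (AE \<omega> in M. f \<omega> = g \<omega>)"

text \<open>Left L0(F,K)-module structure on the abelian group 'e, scalar multiplication smul,
  which must depend only on the class of the scalar.\<close>

definition L0_module :: "'a measure \<Rightarrow> (('a \<Rightarrow> 'k::real_normed_field) \<Rightarrow> 'e::ab_group_add \<Rightarrow> 'e) \<Rightarrow> bool" where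
  "L0_module M smul \<longleftrightarrow>
     (\<forall>\<xi>\<in>L0 M. \<forall>\<eta>\<in>L0 M. aeq M \<xi> \<eta> \<longrightarrow> (\<forall>x. smul \<xi> x = smul \<eta> x)) \<and>
     (\<forall>\<xi>\<in>L0 M. \<forall>x y. smul \<xi> (x + y) = smul \<xi> x + smul \<xi> y) \<and>
     (\<forall>\<xi>\<in>L0 M. \<forall>\<eta>\<in>L0 M. \<forall>x. smul (\<lambda>\<omega>. \<xi> \<omega> + \<eta> \<omega>) x = smul \<xi> x + smul \<eta> x) \<and>
     (\<forall>\<xi>\<in>L0 M. \<forall>\<eta>\<in>L0 M. \<forall>x. smul (\<lambda>\<omega>. \<xi> \<omega> * \<eta> \<omega>) x = smul \<xi> (smul \<eta> x)) \<and>
     (\<forall>x. smul (\<lambda>_. 1) x = x)"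

definition L0_seminorm :: "'a measure \<Rightarrow> (('a \<Rightarrow> 'k::real_normed_field) \<Rightarrow> 'e::ab_group_add \<Rightarrow> 'e)
    \<Rightarrow> ('e \<Rightarrow> 'a \<Rightarrow> real) \<Rightarrow> bool" where
  "L0_seminorm M smul N \<longleftrightarrow>
     (\<forall>x. N x \<in> borel_measurable M \<and> (AE \<omega> in M. 0 \<le> N x \<omega>)) \<and>
     (\<forall>x y. AE \<omega> in M. N (x + y) \<omega> \<le> N x \<omega> + N y \<omega>) \<and>
     (\<forall>\<xi>\<in>L0 M. \<forall>x. AE \<omega> in M. N (smul \<xi> x) \<omega> = norm (\<xi> \<omega>) * N x \<omega>)"

text \<open>Random locally convex module (E, Ps); the separation axiom
  "sup over Ps of the seminorms of x is 0 implies x = 0" is written out: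
  the supremum of a family in L0_+ is 0 iff each member is 0 a.s.\<close>

definition random_lc_module :: "'a measure \<Rightarrow> (('a \<Rightarrow> 'k::real_normed_field) \<Rightarrow> 'e::ab_group_add \<Rightarrow> 'e)
    \<Rightarrow> ('e \<Rightarrow> 'a \<Rightarrow> real) set \<Rightarrow> bool" where
  "random_lc_module M smul Ps \<longleftrightarrow>
     L0_module M smul \<and> (\<forall>N\<in>Ps. L0_seminorm M smul N) \<and>
     (\<forall>x. (\<forall>N\<in>Ps. AE \<omega> in M. N x \<omega> = 0) \<longrightarrow> x = 0)"

definition normQ :: "('e \<Rightarrow> 'a \<Rightarrow> real) set \<Rightarrow> 'e \<Rightarrow> 'a \<Rightarrow> real" where
  "normQ Q x \<omega> = Max (insert 0 ((\<lambda>N. N x \<omega>) ` Q))"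

definition Teps_open :: "'a measure \<Rightarrow> ('e::ab_group_add \<Rightarrow> 'a \<Rightarrow> real) set \<Rightarrow> 'e set \<Rightarrow> bool" where
  "Teps_open M Ps G \<longleftrightarrow>
     (\<forall>x\<in>G. \<exists>Q \<epsilon> lam. finite Q \<and> Q \<subseteq> Ps \<and> 0 < \<epsilon> \<and> 0 < lam \<and> lam < 1 \<and>
        (\<forall>y. measure M {\<omega> \<in> space M. normQ Q y \<omega> < \<epsilon>} > 1 - lam \<longrightarrow> x + y \<in> G))"

text \<open>Open sets of the locally L0-convex topology T_c on L0(F,K) (seminorm family the absolute
  value); open sets are sets of equivalence classes, i.e. saturated sets of representatives.\<close>

definition Tc_open :: "'a measure \<Rightarrow> ('a \<Rightarrow> 'k::real_normed_field) set \<Rightarrow> bool" where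
  "Tc_open M G \<longleftrightarrow> G \<subseteq> L0 M \<and>
     (\<forall>g\<in>G. \<forall>h\<in>L0 M. aeq M g h \<longrightarrow> h \<in> G) \<and>
     (\<forall>g\<in>G. \<exists>\<epsilon>\<in>borel_measurable M. (AE \<omega> in M. 0 < \<epsilon> \<omega>) \<and>
        (\<forall>h\<in>L0 M. (AE \<omega> in M. norm (h \<omega> - g \<omega>) \<le> \<epsilon> \<omega>) \<longrightarrow> h \<in> G))"

definition L0_hom :: "'a measure \<Rightarrow> (('a \<Rightarrow> 'k::real_normed_field) \<Rightarrow> 'e::ab_group_add \<Rightarrow> 'e)
    \<Rightarrow> ('e \<Rightarrow> 'a \<Rightarrow> 'k) \<Rightarrow> bool" where
  "L0_hom M smul f \<longleftrightarrow> (\<forall>x. f x \<in> L0 M) \<and>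
     (\<forall>x y. aeq M (f (x + y)) (\<lambda>\<omega>. f x \<omega> + f y \<omega>)) \<and>
     (\<forall>\<xi>\<in>L0 M. \<forall>x. aeq M (f (smul \<xi> x)) (\<lambda>\<omega>. \<xi> \<omega> * f x \<omega>))"

definition in_min_dual :: "'a measure \<Rightarrow> ('e::ab_group_add \<Rightarrow> 'a \<Rightarrow> real) set
    \<Rightarrow> ('e \<Rightarrow> 'a \<Rightarrow> 'k::real_normed_field) \<Rightarrow> bool" where
  "in_min_dual M Ps f \<longleftrightarrow> (\<forall>G. Tc_open M G \<longrightarrow> Teps_open M Ps (f -` G))"

definition P_atom :: "'a measure \<Rightarrow> 'a set \<Rightarrow> bool" where
  "P_atom M A \<longleftrightarrow> A \<in> sets M \<and> measure M A > 0 \<and>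
     (\<forall>B\<in>sets M. B \<subseteq> A \<longrightarrow> measure M B = 0 \<or> measure M (A - B) = 0)"

end

theory Submission
  imports Defs
begin

(* Sufficiency.  Choose lambda below the mass of every A_i, so that an event of probability
   > 1 - lambda contains each A_i a.s.; as the coefficients xi_i and the inverse of a random
   radius e are bounded on the A_i, a deterministic epsilon gives |f(x + y) - f x| <= e.

   Necessity.  Continuity at 0 for the T_c-open unit ball gives Q, epsilon, lambda with
   P{||y||_Q < epsilon} > 1 - lambda ==> |f y| < 1 a.s. (locale unit_ball_control).  Scaling
   y by random elements of L0 shows that f x vanishes on every event of probability < lambda
   and that |f x| <= (2/epsilon) ||x||_Q; with large_atoms_exhaustion, f x is supported on
   finitely many atoms. *)

lemma normQ_insert:
  assumes "finite Q"
  shows "normQ (insert N Q) x \<omega> = max (N x \<omega>) (normQ Q x \<omega>)"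
  using assms by (cases "Q = {}") (auto simp: normQ_def max.left_commute max.commute)

lemma normQ_nonneg: "finite Q \<Longrightarrow> 0 \<le> normQ Q x \<omega>"
  by (auto simp: normQ_def intro!: Max_ge)

lemma normQ_mono: "finite Q' \<Longrightarrow> Q \<subseteq> Q' \<Longrightarrow> normQ Q x \<omega> \<le> normQ Q' x \<omega>"
  unfolding normQ_def by (rule Max_mono) auto

lemma normQ_measurable:
  assumes "finite Q" "\<And>N. N \<in> Q \<Longrightarrow> N x \<in> borel_measurable M"
  shows "normQ Q x \<in> borel_measurable M"
  using assms
proof (induction Q rule: finite_induct)
  case (insert N Q)
  then have "normQ (insert N Q) x = (\<lambda>\<omega>. max (N x \<omega>) (normQ Q x \<omega>))"
    by (simp add: normQ_insert fun_eq_iff)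
  then show ?case using insert by simp
qed (simp add: normQ_def[abs_def])

lemma normQ_scale:
  assumes "finite Q" "\<And>N. N \<in> Q \<Longrightarrow> AE \<omega> in M. N y \<omega> = c \<omega> * N x \<omega>" "\<And>\<omega>. 0 \<le> c \<omega>"
  shows "AE \<omega> in M. normQ Q y \<omega> = c \<omega> * normQ Q x \<omega>"
  using assms
proof (induction Q rule: finite_induct)
  case (insert N Q)
  have "AE \<omega> in M. normQ Q y \<omega> = c \<omega> * normQ Q x \<omega>" "AE \<omega> in M. N y \<omega> = c \<omega> * N x \<omega>"
    using insert by auto
  then show ?case
    by eventually_elim (use insert(1) assms(3) in \<open>simp add: normQ_insert max_mult_distrib_left\<close>)
qed (simp add: normQ_def)

section \<open>Atoms of a probability space\<close>

context prob_space
begin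

lemma atom_AE:
  assumes "P_atom M A" "B \<in> events" "prob (A \<inter> B) > 0"
  shows "AE \<omega> in M. \<omega> \<in> A \<longrightarrow> \<omega> \<in> B"
proof -
  have A: "A \<in> events" using assms(1) by (simp add: P_atom_def)
  then have "prob (A - (A \<inter> B)) = 0"
    using assms unfolding P_atom_def by (metis Int_lower1 less_irrefl sets.Int)
  then have "prob (A - B) = 0" by (simp add: Diff_Int)
  then have "AE \<omega> in M. \<omega> \<notin> A - B" using A assms(2) prob_eq_0 by blast
  then show ?thesis by eventually_elim auto
qed

lemma atom_countable_cover:
  assumes "P_atom M A" "\<And>m::nat. D m \<in> events" "AE \<omega> in M. \<omega> \<in> A \<longrightarrow> (\<exists>m. \<omega> \<in> D m)"
  shows "\<exists>m. AE \<omega> in M. \<omega> \<in> A \<longrightarrow> \<omega> \<in> D m"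
proof (rule ccontr)
  assume none: "\<not> ?thesis"
  have A: "A \<in> events" using assms(1) by (simp add: P_atom_def)
  have "prob (A \<inter> D m) = 0" for m
  proof (rule ccontr)
    assume "prob (A \<inter> D m) \<noteq> 0"
    then have "prob (A \<inter> D m) > 0" using measure_nonneg[of M "A \<inter> D m"] by linarith
    then show False using none atom_AE[OF assms(1,2)] by blast
  qed
  then have "\<forall>m. AE \<omega> in M. \<omega> \<notin> A \<inter> D m" using prob_eq_0 A assms(2) by blast
  then have "AE \<omega> in M. \<forall>m. \<omega> \<notin> A \<inter> D m" by (rule AE_all_countable[THEN iffD2])
  with assms(3) have "AE \<omega> in M. \<omega> \<notin> A" by eventually_elim auto
  then have "prob A = 0" using prob_eq_0 A by blast
  then show False using assms(1) by (simp add: P_atom_def)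
qed

lemma atom_bounded_above:
  fixes g :: "'a \<Rightarrow> real"
  assumes "P_atom M A" "g \<in> borel_measurable M"
  shows "\<exists>c>0. AE \<omega> in M. \<omega> \<in> A \<longrightarrow> g \<omega> \<le> c"
proof -
  define D where "D m = {\<omega> \<in> space M. g \<omega> \<le> real m}" for m :: nat
  have "D m \<in> events" for m unfolding D_def using assms(2) by measurable
  moreover have "AE \<omega> in M. \<omega> \<in> A \<longrightarrow> (\<exists>m. \<omega> \<in> D m)"
    using AE_space by eventually_elim (use real_arch_simple in \<open>auto simp: D_def\<close>)
  ultimately obtain m where "AE \<omega> in M. \<omega> \<in> A \<longrightarrow> \<omega> \<in> D m"
    using atom_countable_cover[OF assms(1)] by blast
  then have "AE \<omega> in M. \<omega> \<in> A \<longrightarrow> g \<omega> \<le> real m + 1"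
    by eventually_elim (auto simp: D_def)
  then show ?thesis by (intro exI[of _ "real m + 1"]) auto
qed

lemma atoms_bounded_above:
  fixes n :: nat and g :: "'a \<Rightarrow> real"
  assumes "\<forall>i<n. P_atom M (A i)" "g \<in> borel_measurable M"
  shows "\<exists>c>0. AE \<omega> in M. \<omega> \<in> (\<Union>i<n. A i) \<longrightarrow> g \<omega> \<le> c"
  using assms(1)
proof (induction n)
  case (Suc n)
  then obtain c where c: "c > 0" "AE \<omega> in M. \<omega> \<in> (\<Union>i<n. A i) \<longrightarrow> g \<omega> \<le> c" by auto
  obtain d where d: "d > 0" "AE \<omega> in M. \<omega> \<in> A n \<longrightarrow> g \<omega> \<le> d"
    using atom_bounded_above Suc.prems assms(2) by blast
  from c(2) d(2) have "AE \<omega> in M. \<omega> \<in> (\<Union>i<Suc n. A i) \<longrightarrow> g \<omega> \<le> max c d"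
    by eventually_elim (auto simp: lessThan_Suc)
  then show ?case using c(1) by (intro exI[of _ "max c d"]) auto
qed (auto intro: exI[of _ 1])

lemma large_event_contains_atom:
  assumes "P_atom M A" "S \<in> events" "1 - prob A < prob S"
  shows "AE \<omega> in M. \<omega> \<in> A \<longrightarrow> \<omega> \<in> S"
proof (rule atom_AE[OF assms(1,2)])
  have A: "A \<in> events" using assms(1) by (simp add: P_atom_def)
  have "prob (A \<union> S) = prob A + prob S - prob (A \<inter> S)"
    using finite_measure_Union' finite_measure_Diff' A assms(2) by (simp add: Int_commute)
  then show "prob (A \<inter> S) > 0" using prob_le_1[of "A \<union> S"] assms(3) by linarith
qed

text \<open>Every event of positive probability contains either an event of positive probability
  below \<open>lam\<close> or an atom of probability at least \<open>lam\<close>: split non-atoms repeatedly, by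
  induction on \<open>k\<close> for events of probability below \<open>lam * 2^k\<close>.\<close>

lemma small_or_atom:
  assumes lam: "0 < lam" and B: "B \<in> events" "0 < prob B"
  shows "(\<exists>C\<in>events. C \<subseteq> B \<and> 0 < prob C \<and> prob C < lam) \<or>
         (\<exists>A. P_atom M A \<and> A \<subseteq> B \<and> lam \<le> prob A)"
proof -
  let ?concl = "\<lambda>B. (\<exists>C\<in>events. C \<subseteq> B \<and> 0 < prob C \<and> prob C < lam) \<or>
                     (\<exists>A. P_atom M A \<and> A \<subseteq> B \<and> lam \<le> prob A)"
  have "?concl B" if "B \<in> events" "0 < prob B" "prob B < lam * 2 ^ k" for k B
    using that
  proof (induction k arbitrary: B)
    case (Suc k)
    show ?case
    proof (cases "P_atom M B")
      case True
      show ?thesis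
      proof (cases "lam \<le> prob B")
        case False
        then show ?thesis using Suc.prems by (intro disjI1 bexI[of _ B]) auto
      qed (use \<open>P_atom M B\<close> in blast)
    next
      case False
      then obtain B1 where B1: "B1 \<in> events" "B1 \<subseteq> B" "prob B1 \<noteq> 0" "prob (B - B1) \<noteq> 0"
        using Suc.prems unfolding P_atom_def by auto
      have "prob (B - B1) = prob B - prob B1" using finite_measure_Diff B1 Suc.prems by blast
      then have "prob B1 < lam * 2 ^ k \<or> prob (B - B1) < lam * 2 ^ k" using Suc.prems(3) by auto
      moreover have "0 < prob B1" "0 < prob (B - B1)" "B - B1 \<in> events"
        using B1 Suc.prems(1) measure_nonneg[of M B1] measure_nonneg[of M "B - B1"]
        by (auto simp: order_less_le)
      ultimately have "?concl B1 \<or> ?concl (B - B1)" using Suc.IH B1(1) by blast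
      then show ?thesis using B1(2) by blast
    qed
  qed (auto intro: bexI[of _ B])
  moreover obtain k where "1 / lam < 2 ^ k" using real_arch_pow[of "2::real" "1 / lam"] by auto
  then have "1 < lam * 2 ^ k" using lam by (simp add: field_simps)
  then have "prob B < lam * 2 ^ k" using prob_le_1[of B] by linarith
  ultimately show ?thesis using B by blast
qed

lemma disjoint_large_events_bound:
  assumes "\<forall>i<n. A i \<in> events \<and> lam \<le> prob (A i)" "disjoint_family_on A {..<n}"
  shows "real n * lam \<le> 1"
proof -
  have "real n * lam = (\<Sum>i<n. lam)" by simp
  also have "\<dots> \<le> (\<Sum>i<n. prob (A i))" using assms(1) by (intro sum_mono) auto
  also have "\<dots> = prob (\<Union>i<n. A i)"
    using assms by (intro measure_finite_Union[symmetric]) (auto simp: emeasure_eq_measure)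
  also have "\<dots> \<le> 1" by (rule prob_le_1)
  finally show ?thesis .
qed

lemma large_atoms_exhaustion:
  assumes lam: "0 < lam"
  shows "\<exists>(n::nat) A. (\<forall>i<n. P_atom M (A i)) \<and>
    (\<forall>T\<in>events. T \<inter> (\<Union>i<n. A i) = {} \<longrightarrow> 0 < prob T \<longrightarrow>
       (\<exists>C\<in>events. C \<subseteq> T \<and> 0 < prob C \<and> prob C < lam))"
proof -
  define family where "family n \<longleftrightarrow> (\<exists>A. (\<forall>i<n. P_atom M (A i) \<and> lam \<le> prob (A i)) \<and>
      disjoint_family_on A {..<n})" for n :: nat
  have bounded: "n \<le> nat \<lceil>1 / lam\<rceil>" if fam: "family n" for n
  proof -
    obtain A where "\<forall>i<n. P_atom M (A i) \<and> lam \<le> prob (A i)" "disjoint_family_on A {..<n}"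
      using fam unfolding family_def by blast
    then have "real n * lam \<le> 1" by (intro disjoint_large_events_bound) (auto simp: P_atom_def)
    then have "real n \<le> 1 / lam" using lam by (simp add: field_simps)
    then have "real n \<le> real (nat \<lceil>1 / lam\<rceil>)" using real_nat_ceiling_ge[of "1 / lam"] by linarith
    then show ?thesis by simp
  qed
  have "family 0" by (simp add: family_def disjoint_family_on_def)
  define n where "n = Greatest family"
  have n: "family n" unfolding n_def using \<open>family 0\<close> bounded by (rule GreatestI_nat)
  have maximal: "m \<le> n" if "family m" for m unfolding n_def using that bounded by (rule Greatest_le_nat)
  obtain A where A: "\<forall>i<n. P_atom M (A i) \<and> lam \<le> prob (A i)"
    and disj: "disjoint_family_on A {..<n}" using n unfolding family_def by blast
  show ?thesis
  proof (intro exI conjI ballI impI)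
    show "\<forall>i<n. P_atom M (A i)" using A by blast
    fix T assume T: "T \<in> events" "T \<inter> (\<Union>i<n. A i) = {}" "0 < prob T"
    show "\<exists>C\<in>events. C \<subseteq> T \<and> 0 < prob C \<and> prob C < lam"
    proof (rule ccontr)
      assume "\<not> ?thesis"
      then obtain A' where A': "P_atom M A'" "A' \<subseteq> T" "lam \<le> prob A'"
        using small_or_atom[OF lam T(1,3)] by blast
      txt \<open>Then \<open>A'\<close> could be added to the maximal family.\<close>
      have "family (Suc n)" unfolding family_def
      proof (intro exI conjI)
        show "\<forall>i<Suc n. P_atom M ((A(n := A')) i) \<and> lam \<le> prob ((A(n := A')) i)"
          using A A' by (auto simp: less_Suc_eq)
        show "disjoint_family_on (A(n := A')) {..<Suc n}"
          using disj A'(2) T(2) unfolding disjoint_family_on_def by (auto simp: less_Suc_eq) blast+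
      qed
      then have "Suc n \<le> n" by (rule maximal)
      then show False by simp
    qed
  qed
qed

end

section \<open>Sufficiency: domination over finitely many atoms gives continuity\<close>

definition atom_dominated :: "'a measure \<Rightarrow> ('e \<Rightarrow> 'a \<Rightarrow> real) set \<Rightarrow> ('e \<Rightarrow> 'a \<Rightarrow> 'k::real_normed_field) \<Rightarrow> bool"
  where "atom_dominated M Ps f \<longleftrightarrow>
    (\<exists>(n::nat) A \<xi> Q.
       (\<forall>i<n. P_atom M (A i) \<and> \<xi> i \<in> borel_measurable M \<and> (AE \<omega> in M. 0 \<le> \<xi> i \<omega>) \<and>
              finite (Q i) \<and> Q i \<subseteq> Ps) \<and>
       (\<forall>x. AE \<omega> in M. norm (f x \<omega>) \<le>
              (\<Sum>i<n. indicator (A i) \<omega> * \<xi> i \<omega> * normQ (Q i) x \<omega>)))"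

lemma dominating_sum_le:
  fixes n :: nat
  assumes "finite Q'" "\<forall>i<n. Q i \<subseteq> Q'"
    and "\<forall>i<n. \<omega> \<in> A i \<longrightarrow> normQ Q' y \<omega> < \<delta>" "\<forall>i<n. 0 \<le> \<xi> i \<omega>"
  shows "(\<Sum>i<n. indicator (A i) \<omega> * \<xi> i \<omega> * normQ (Q i) y \<omega>)
           \<le> \<delta> * (\<Sum>i<n. indicator (A i) \<omega> * \<xi> i \<omega>)"
  unfolding sum_distrib_left
proof (rule sum_mono)
  fix i assume i: "i \<in> {..<n}"
  show "indicator (A i) \<omega> * \<xi> i \<omega> * normQ (Q i) y \<omega> \<le> \<delta> * (indicator (A i) \<omega> * \<xi> i \<omega>)"
  proof (cases "\<omega> \<in> A i")
    case True
    have "normQ (Q i) y \<omega> \<le> normQ Q' y \<omega>" using assms(1,2) i by (intro normQ_mono) auto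
    then have "\<xi> i \<omega> * normQ (Q i) y \<omega> \<le> \<xi> i \<omega> * \<delta>"
      using assms(3,4) i True by (intro mult_left_mono) auto
    then show ?thesis using True by (simp add: mult.commute)
  qed simp
qed

lemma (in prob_space) atom_weighted_sum_bounded:
  fixes n :: nat and \<xi> :: "nat \<Rightarrow> 'a \<Rightarrow> real"
  assumes atoms: "\<forall>i<n. P_atom M (A i) \<and> \<xi> i \<in> borel_measurable M"
    and e: "e \<in> borel_measurable M" "AE \<omega> in M. 0 < e \<omega>"
  shows "\<exists>c>0. AE \<omega> in M. (\<Sum>i<n. indicator (A i) \<omega> * \<xi> i \<omega>) \<le> c * e \<omega>"
proof -
  define T where "T \<omega> = (\<Sum>i<n. indicator (A i) \<omega> * \<xi> i \<omega>)" for \<omega>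
  have "(\<lambda>\<omega>. T \<omega> / e \<omega>) \<in> borel_measurable M"
    unfolding T_def using atoms e(1)
    by (intro borel_measurable_divide borel_measurable_sum borel_measurable_times) (auto simp: P_atom_def)
  then obtain c where c: "c > 0" "AE \<omega> in M. \<omega> \<in> (\<Union>i<n. A i) \<longrightarrow> T \<omega> / e \<omega> \<le> c"
    using atoms_bounded_above atoms by blast
  have "AE \<omega> in M. T \<omega> \<le> c * e \<omega>"
    using c(2) e(2)
  proof eventually_elim
    case (elim \<omega>)
    show ?case
    proof (cases "\<omega> \<in> (\<Union>i<n. A i)")
      case True
      then show ?thesis using elim by (simp add: divide_le_eq mult.commute)
    next
      case False
      then have "T \<omega> = 0" unfolding T_def by (intro sum.neutral) auto
      then show ?thesis using elim c(1) by simp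
    qed
  qed
  then show ?thesis using c(1) unfolding T_def by blast
qed

text \<open>For finitely many atoms there is \<open>lam\<close> such that every event of probability above
  \<open>1 - lam\<close> contains all of them a.s.: take \<open>lam\<close> below the mass of each atom.\<close>

lemma (in prob_space) large_events_contain_atoms:
  fixes n :: nat
  assumes atoms: "\<forall>i<n. P_atom M (A i)"
  shows "\<exists>lam. 0 < lam \<and> lam < 1 \<and>
    (\<forall>S\<in>events. 1 - lam < prob S \<longrightarrow> (AE \<omega> in M. \<forall>i<n. \<omega> \<in> A i \<longrightarrow> \<omega> \<in> S))"
proof (intro exI conjI ballI impI)
  define lam where "lam = Min (insert (1/2) ((\<lambda>i. prob (A i) / 2) ` {..<n}))"
  have probA: "0 < prob (A i)" if "i < n" for i using atoms that by (auto simp: P_atom_def)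
  show "0 < lam" unfolding lam_def using probA by (auto simp: Min_gr_iff)
  have "lam \<le> 1/2" unfolding lam_def by (rule Min_le) auto
  then show "lam < 1" by simp
  have lam_le: "lam < prob (A i)" if "i < n" for i
  proof -
    have "lam \<le> prob (A i) / 2" unfolding lam_def using that by (intro Min_le) auto
    then show ?thesis using probA[OF that] by linarith
  qed
  fix S assume S: "S \<in> events" "1 - lam < prob S"
  have "AE \<omega> in M. \<forall>i\<in>{..<n}. \<omega> \<in> A i \<longrightarrow> \<omega> \<in> S"
  proof (rule AE_finite_allI)
    fix i assume "i \<in> {..<n}"
    then show "AE \<omega> in M. \<omega> \<in> A i \<longrightarrow> \<omega> \<in> S"
      using large_event_contains_atom[OF _ S(1)] atoms S(2) lam_le by force
  qed simp
  then show "AE \<omega> in M. \<forall>i<n. \<omega> \<in> A i \<longrightarrow> \<omega> \<in> S" by eventually_elim blast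
qed

text \<open>Sufficiency: at \<open>x\<close>, with \<open>e\<close> the radius of a \<open>T_c\<close>-ball around \<open>f x\<close>, the constants
  \<open>c\<close> and \<open>lam\<close> above give an \<open>(1/c, lam)\<close>-neighbourhood of 0 whose translate by \<open>x\<close> maps
  into that ball.\<close>

lemma (in prob_space) dominated_by_atoms_imp_min_dual:
  fixes smul :: "('a \<Rightarrow> 'k::real_normed_field) \<Rightarrow> 'e::ab_group_add \<Rightarrow> 'e"
    and f :: "'e \<Rightarrow> 'a \<Rightarrow> 'k"
  assumes semi: "\<forall>N\<in>Ps. L0_seminorm M smul N"
    and hom: "L0_hom M smul f"
    and dominated: "atom_dominated M Ps f"
  shows "in_min_dual M Ps f"
  unfolding in_min_dual_def Teps_open_def
proof (intro allI impI ballI)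
  obtain n :: nat and A \<xi> Q
    where data: "\<forall>i<n. P_atom M (A i) \<and> \<xi> i \<in> borel_measurable M \<and> (AE \<omega> in M. 0 \<le> \<xi> i \<omega>) \<and>
              finite (Q i) \<and> Q i \<subseteq> Ps"
    and bound: "\<forall>x. AE \<omega> in M. norm (f x \<omega>) \<le>
              (\<Sum>i<n. indicator (A i) \<omega> * \<xi> i \<omega> * normQ (Q i) x \<omega>)"
    using dominated unfolding atom_dominated_def by blast
  fix G x assume G: "Tc_open M G" and "x \<in> f -` G"
  then obtain e where e_meas: "e \<in> borel_measurable M" and e_pos: "AE \<omega> in M. 0 < e \<omega>"
     and ball: "\<And>h. h \<in> L0 M \<Longrightarrow> (AE \<omega> in M. norm (h \<omega> - f x \<omega>) \<le> e \<omega>) \<Longrightarrow> h \<in> G"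
    unfolding Tc_open_def by blast
  define T where "T \<omega> = (\<Sum>i<n. indicator (A i) \<omega> * \<xi> i \<omega>)" for \<omega>
  obtain c where c: "c > 0" "AE \<omega> in M. T \<omega> \<le> c * e \<omega>"
    using atom_weighted_sum_bounded[of n A \<xi> e] data e_meas e_pos unfolding T_def by blast
  obtain lam where lam: "0 < lam" "lam < 1"
    and covers: "\<forall>S\<in>events. 1 - lam < prob S \<longrightarrow> (AE \<omega> in M. \<forall>i<n. \<omega> \<in> A i \<longrightarrow> \<omega> \<in> S)"
    using large_events_contain_atoms[of n A] data by blast
  define Q' where "Q' = \<Union> (Q ` {..<n})"
  have Q': "finite Q'" "Q' \<subseteq> Ps" "\<forall>i<n. Q i \<subseteq> Q'" unfolding Q'_def using data by auto
  show "\<exists>Q \<epsilon> lam. finite Q \<and> Q \<subseteq> Ps \<and> 0 < \<epsilon> \<and> 0 < lam \<and> lam < 1 \<and>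
          (\<forall>y. 1 - lam < prob {\<omega> \<in> space M. normQ Q y \<omega> < \<epsilon>} \<longrightarrow> x + y \<in> f -` G)"
  proof (intro exI conjI allI impI)
    show "finite Q'" "Q' \<subseteq> Ps" "0 < 1 / c" "0 < lam" "lam < 1" using Q' c lam by auto
    fix y
    define S where "S = {\<omega> \<in> space M. normQ Q' y \<omega> < 1 / c}"
    assume "1 - lam < prob {\<omega> \<in> space M. normQ Q' y \<omega> < 1 / c}"
    then have PS: "1 - lam < prob S" unfolding S_def .
    have "normQ Q' y \<in> borel_measurable M"
      using Q' semi by (intro normQ_measurable) (auto simp: L0_seminorm_def)
    then have S: "S \<in> events" unfolding S_def by measurable
    have "AE \<omega> in M. \<forall>i<n. \<omega> \<in> A i \<longrightarrow> \<omega> \<in> S" using covers S PS by blast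
    moreover have "AE \<omega> in M. \<forall>i\<in>{..<n}. 0 \<le> \<xi> i \<omega>"
      using data by (intro AE_finite_allI) auto
    moreover have "AE \<omega> in M. f (x + y) \<omega> = f x \<omega> + f y \<omega>"
      using hom by (auto simp: L0_hom_def aeq_def)
    ultimately have "AE \<omega> in M. norm (f (x + y) \<omega> - f x \<omega>) \<le> e \<omega>"
      using c(2) bound[rule_format, of y]
    proof eventually_elim
      case (elim \<omega>)
      have "\<forall>i<n. \<omega> \<in> A i \<longrightarrow> normQ Q' y \<omega> < 1 / c" using elim(1) by (simp add: S_def)
      then have "norm (f (x + y) \<omega> - f x \<omega>) \<le> 1 / c * T \<omega>"
        using elim Q' dominating_sum_le[of Q' n Q \<omega> A y "1 / c" \<xi>] by (simp add: T_def)
      also have "\<dots> \<le> e \<omega>" using elim(4) c(1) by (simp add: field_simps)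
      finally show ?case .
    qed
    then show "x + y \<in> f -` G" using ball hom by (simp add: L0_hom_def)
  qed
qed

section \<open>Necessity: continuity forces domination over finitely many atoms\<close>

text \<open>The random open unit ball of \<open>L0\<close> is \<open>T_c\<close>-open: around \<open>g\<close> lies the ball of random
  radius \<open>(1 - |g|) / 2\<close>.\<close>

lemma Tc_open_unit_ball:
  "Tc_open M {h :: 'a \<Rightarrow> 'k::real_normed_field. h \<in> L0 M \<and> (AE \<omega> in M. norm (h \<omega>) < 1)}"
  (is "Tc_open M ?G")
  unfolding Tc_open_def
proof (intro conjI ballI impI)
  fix g h assume g: "g \<in> ?G" and h: "h \<in> L0 M" and "aeq M g h"
  have "AE \<omega> in M. norm (g \<omega>) < 1" using g by blast
  moreover have "AE \<omega> in M. g \<omega> = h \<omega>" using \<open>aeq M g h\<close> unfolding aeq_def .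
  ultimately have "AE \<omega> in M. norm (h \<omega>) < 1" by eventually_elim simp
  then show "h \<in> ?G" using h by blast
next
  fix g assume g: "g \<in> ?G"
  then have g_lt: "AE \<omega> in M. norm (g \<omega>) < 1" by blast
  show "\<exists>\<epsilon>\<in>borel_measurable M. (AE \<omega> in M. 0 < \<epsilon> \<omega>) \<and>
          (\<forall>h\<in>L0 M. (AE \<omega> in M. norm (h \<omega> - g \<omega>) \<le> \<epsilon> \<omega>) \<longrightarrow> h \<in> ?G)"
  proof (intro bexI conjI ballI impI)
    have "g \<in> borel_measurable M" using g by (simp add: L0_def)
    then show "(\<lambda>\<omega>. (1 - norm (g \<omega>)) / 2) \<in> borel_measurable M" by measurable
    show "AE \<omega> in M. 0 < (1 - norm (g \<omega>)) / 2" using g_lt by eventually_elim simp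
    fix h assume h: "h \<in> L0 M" "AE \<omega> in M. norm (h \<omega> - g \<omega>) \<le> (1 - norm (g \<omega>)) / 2"
    have "AE \<omega> in M. norm (h \<omega>) < 1" using h(2) g_lt
    proof eventually_elim
      case (elim \<omega>)
      then show ?case using norm_triangle_sub[of "h \<omega>" "g \<omega>"] by argo
    qed
    then show "h \<in> ?G" using h(1) by blast
  qed
qed blast

lemma (in prob_space) min_dual_imp_unit_ball_control:
  fixes f :: "'e::ab_group_add \<Rightarrow> 'a \<Rightarrow> 'k::real_normed_field"
  assumes hom: "L0_hom M smul f" and cont: "in_min_dual M Ps f"
  shows "\<exists>Q \<epsilon> lam. finite Q \<and> Q \<subseteq> Ps \<and> 0 < \<epsilon> \<and> 0 < lam \<and>
    (\<forall>y. 1 - lam < prob {\<omega> \<in> space M. normQ Q y \<omega> < \<epsilon>} \<longrightarrow> (AE \<omega> in M. norm (f y \<omega>) < 1))"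
proof -
  let ?G = "{h :: 'a \<Rightarrow> 'k. h \<in> L0 M \<and> (AE \<omega> in M. norm (h \<omega>) < 1)}"
  have open_preimage: "Teps_open M Ps (f -` ?G)"
    by (rule cont[unfolded in_min_dual_def, rule_format, OF Tc_open_unit_ball])
  have "AE \<omega> in M. f (0 + 0) \<omega> = f 0 \<omega> + f 0 \<omega>" using hom unfolding L0_hom_def aeq_def by blast
  then have "AE \<omega> in M. norm (f 0 \<omega>) < 1" by eventually_elim simp
  then have "0 \<in> f -` ?G" using hom unfolding L0_hom_def by simp
  with open_preimage obtain Q \<epsilon> lam where Q: "finite Q" "Q \<subseteq> Ps" "0 < \<epsilon>" "0 < lam"
    and near_0: "\<forall>y. 1 - lam < prob {\<omega> \<in> space M. normQ Q y \<omega> < \<epsilon>} \<longrightarrow> 0 + y \<in> f -` ?G"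
    unfolding Teps_open_def by (elim ballE exE conjE) auto
  show ?thesis
  proof (intro exI conjI allI impI)
    fix y assume "1 - lam < prob {\<omega> \<in> space M. normQ Q y \<omega> < \<epsilon>}"
    then show "AE \<omega> in M. norm (f y \<omega>) < 1" using near_0 by auto
  qed (use Q in auto)
qed

locale unit_ball_control = prob_space M
  for M :: "'a measure" and smul :: "('a \<Rightarrow> 'k::real_normed_field) \<Rightarrow> 'e::ab_group_add \<Rightarrow> 'e"
    and f :: "'e \<Rightarrow> 'a \<Rightarrow> 'k" and Q :: "('e \<Rightarrow> 'a \<Rightarrow> real) set" and \<epsilon> lam :: real +
  assumes seminorms: "\<forall>N\<in>Q. L0_seminorm M smul N"
    and hom: "L0_hom M smul f"
    and finite_Q: "finite Q"
    and eps_pos: "0 < \<epsilon>" and lam_pos: "0 < lam"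
    and control: "\<And>y. 1 - lam < prob {\<omega> \<in> space M. normQ Q y \<omega> < \<epsilon>} \<Longrightarrow>
                    AE \<omega> in M. norm (f y \<omega>) < 1"
begin

lemma normQ_borel: "normQ Q y \<in> borel_measurable M"
  using finite_Q seminorms by (intro normQ_measurable) (auto simp: L0_seminorm_def)

lemma scaled_control:
  assumes \<xi>: "\<xi> \<in> L0 M" and C: "C \<in> events" "prob C < lam"
    and small: "\<And>\<omega>. \<omega> \<notin> C \<Longrightarrow> norm (\<xi> \<omega>) * normQ Q x \<omega> < \<epsilon>"
  shows "AE \<omega> in M. norm (\<xi> \<omega> * f x \<omega>) < 1"
proof -
  define S where "S = {\<omega> \<in> space M. normQ Q (smul \<xi> x) \<omega> < \<epsilon>}"
  have S: "S \<in> events" unfolding S_def using normQ_borel by measurable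
  have "AE \<omega> in M. normQ Q (smul \<xi> x) \<omega> = norm (\<xi> \<omega>) * normQ Q x \<omega>"
    using finite_Q seminorms \<xi> by (intro normQ_scale) (auto simp: L0_seminorm_def)
  then have "AE \<omega> in M. \<omega> \<in> space M - C \<longrightarrow> \<omega> \<in> S"
    using AE_space by eventually_elim (use small in \<open>auto simp: S_def\<close>)
  then have "prob (space M - C) \<le> prob S" using S C(1) by (intro finite_measure_mono_AE) auto
  then have "1 - lam < prob S" using prob_compl[OF C(1)] C(2) by linarith
  then have "AE \<omega> in M. norm (f (smul \<xi> x) \<omega>) < 1" using control unfolding S_def by blast
  moreover have "AE \<omega> in M. f (smul \<xi> x) \<omega> = \<xi> \<omega> * f x \<omega>"
    using hom \<xi> unfolding L0_hom_def aeq_def by blast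
  ultimately show ?thesis by eventually_elim simp
qed

text \<open>Where \<open>\<parallel>x\<parallel>\<^sub>Q\<close> vanishes outside a small event, \<open>f x\<close> vanishes: apply the control to
  all integer multiples of \<open>x\<close> localised to that set.\<close>

lemma vanishes_where_null:
  assumes D: "D \<in> events" and C: "C \<in> events" "prob C < lam"
    and null: "\<And>\<omega>. \<omega> \<in> D \<Longrightarrow> \<omega> \<notin> C \<Longrightarrow> normQ Q x \<omega> = 0"
  shows "AE \<omega> in M. \<omega> \<in> D \<longrightarrow> f x \<omega> = 0"
proof -
  have multiples: "AE \<omega> in M. \<omega> \<in> D \<longrightarrow> real m * norm (f x \<omega>) < 1" for m :: nat
  proof -
    define \<xi> where "\<xi> \<omega> = (of_real (real m * indicator D \<omega>) :: 'k)" for \<omega>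
    have "\<xi> \<in> L0 M" unfolding \<xi>_def L0_def using D by measurable
    then have "AE \<omega> in M. norm (\<xi> \<omega> * f x \<omega>) < 1"
      using C by (rule scaled_control) (auto simp: \<xi>_def null eps_pos indicator_def)
    then show ?thesis by eventually_elim (auto simp: \<xi>_def norm_mult)
  qed
  have "AE \<omega> in M. \<forall>m::nat. \<omega> \<in> D \<longrightarrow> real m * norm (f x \<omega>) < 1"
    by (rule AE_all_countable[THEN iffD2]) (use multiples in blast)
  then show ?thesis
  proof eventually_elim
    case (elim \<omega>)
    show ?case
    proof (rule impI, rule ccontr)
      assume "\<omega> \<in> D" "f x \<omega> \<noteq> 0"
      then have "0 < norm (f x \<omega>)" by simp
      then obtain m where "1 < real m * norm (f x \<omega>)" using reals_Archimedean3 by blast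
      moreover have "real m * norm (f x \<omega>) < 1" using elim \<open>\<omega> \<in> D\<close> by blast
      ultimately show False by linarith
    qed
  qed
qed

lemma vanishes_on_small_events:
  assumes "C \<in> events" "prob C < lam"
  shows "AE \<omega> in M. \<omega> \<in> C \<longrightarrow> f x \<omega> = 0"
  by (rule vanishes_where_null[OF assms(1) assms]) simp

text \<open>The pointwise bound \<open>|f x| \<le> (2/\<epsilon>) \<parallel>x\<parallel>\<^sub>Q\<close>: scale by \<open>\<epsilon> / (2 \<parallel>x\<parallel>\<^sub>Q)\<close> where the seminorm
  is positive, and use \<open>vanishes_where_null\<close> where it is zero.\<close>

lemma pointwise_bound: "AE \<omega> in M. norm (f x \<omega>) \<le> 2 / \<epsilon> * normQ Q x \<omega>"
proof -
  define N where "N = normQ Q x"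
  have N: "N \<in> borel_measurable M" "\<And>\<omega>. 0 \<le> N \<omega>"
    unfolding N_def using normQ_borel normQ_nonneg[OF finite_Q] by auto
  define c where "c \<omega> = \<epsilon> / (2 * N \<omega>)" for \<omega>
  define \<xi> where "\<xi> \<omega> = (of_real (c \<omega>) :: 'k)" for \<omega>
  have "\<xi> \<in> L0 M" unfolding \<xi>_def c_def L0_def using N(1) by measurable
  have norm_\<xi>: "norm (\<xi> \<omega>) = c \<omega>" for \<omega>
    using N(2)[of \<omega>] eps_pos unfolding \<xi>_def norm_of_real c_def by simp
  from \<open>\<xi> \<in> L0 M\<close> have scaled: "AE \<omega> in M. norm (\<xi> \<omega> * f x \<omega>) < 1"
  proof (rule scaled_control[of _ "{}"])
    fix \<omega>
    have "norm (\<xi> \<omega>) * N \<omega> < \<epsilon>"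
    proof (cases "N \<omega> = 0")
      case False
      then have "norm (\<xi> \<omega>) * N \<omega> = \<epsilon> / 2" by (simp add: norm_\<xi> c_def)
      then show ?thesis using eps_pos by simp
    qed (simp add: norm_\<xi> c_def eps_pos)
    then show "norm (\<xi> \<omega>) * normQ Q x \<omega> < \<epsilon>" by (simp add: N_def)
  qed (use lam_pos in auto)
  have null: "AE \<omega> in M. \<omega> \<in> {\<omega> \<in> space M. N \<omega> = 0} \<longrightarrow> f x \<omega> = 0"
    using N(1) lam_pos by (intro vanishes_where_null[where C = "{}"]) (auto simp: N_def)
  from scaled null AE_space show ?thesis
  proof eventually_elim
    case (elim \<omega>)
    show ?case
    proof (cases "N \<omega> = 0")
      case False
      then have "0 < N \<omega>" using N(2)[of \<omega>] by simp
      then have "norm (f x \<omega>) * (\<epsilon> / (2 * N \<omega>)) < 1"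
        using elim(1) by (simp add: norm_\<xi> c_def norm_mult mult.commute)
      then show ?thesis using \<open>0 < N \<omega>\<close> eps_pos by (simp add: N_def field_simps)
    qed (use elim in \<open>simp add: N_def\<close>)
  qed
qed

text \<open>If finitely many atoms exhaust the space in the sense of \<open>large_atoms_exhaustion\<close>, then
  \<open>f x\<close> vanishes a.s. outside them: a positive remainder would contain a small event on
  which \<open>f x \<noteq> 0\<close>.\<close>

lemma supported_on_atoms:
  fixes n :: nat
  assumes atoms: "\<forall>i<n. P_atom M (A i)"
    and exhaust: "\<forall>T\<in>events. T \<inter> (\<Union>i<n. A i) = {} \<longrightarrow> 0 < prob T \<longrightarrow>
                     (\<exists>C\<in>events. C \<subseteq> T \<and> 0 < prob C \<and> prob C < lam)"
  shows "AE \<omega> in M. f x \<omega> \<noteq> 0 \<longrightarrow> (\<exists>i<n. \<omega> \<in> A i)"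
proof -
  define T where "T = {\<omega> \<in> space M. f x \<omega> \<noteq> 0} - (\<Union>i<n. A i)"
  have "f x \<in> borel_measurable M" using hom unfolding L0_hom_def L0_def by blast
  then have "{\<omega> \<in> space M. f x \<omega> \<noteq> 0} \<in> events" by measurable
  moreover have "(\<Union>i<n. A i) \<in> events" using atoms by (intro sets.finite_UN) (auto simp: P_atom_def)
  ultimately have T: "T \<in> events" unfolding T_def by (rule sets.Diff)
  have "prob T = 0"
  proof (rule ccontr)
    assume "prob T \<noteq> 0"
    then have "0 < prob T" using measure_nonneg[of M T] by linarith
    moreover have "T \<inter> (\<Union>i<n. A i) = {}" unfolding T_def by blast
    ultimately have "\<exists>C\<in>events. C \<subseteq> T \<and> 0 < prob C \<and> prob C < lam"
      using exhaust T by blast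
    then obtain C where C: "C \<in> events" "C \<subseteq> T" "0 < prob C" "prob C < lam" by blast
    have nonzero: "\<And>\<omega>. \<omega> \<in> C \<Longrightarrow> f x \<omega> \<noteq> 0" using C(2) unfolding T_def by blast
    have "AE \<omega> in M. \<omega> \<notin> C"
      using vanishes_on_small_events[OF C(1,4)] by eventually_elim (use nonzero in blast)
    then show False using prob_eq_0[OF C(1)] C(3) by simp
  qed
  then have "AE \<omega> in M. \<omega> \<notin> T" using prob_eq_0[OF T] by simp
  then show ?thesis using AE_space by eventually_elim (auto simp: T_def)
qed

lemma dominated_on_atoms:
  "\<exists>(n::nat) A. (\<forall>i<n. P_atom M (A i)) \<and>
     (\<forall>x. AE \<omega> in M. norm (f x \<omega>) \<le> (\<Sum>i<n. indicator (A i) \<omega> * (2 / \<epsilon>) * normQ Q x \<omega>))"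
proof -
  obtain n :: nat and A where atoms: "\<forall>i<n. P_atom M (A i)"
    and exhaust: "\<forall>T\<in>events. T \<inter> (\<Union>i<n. A i) = {} \<longrightarrow> 0 < prob T \<longrightarrow>
                     (\<exists>C\<in>events. C \<subseteq> T \<and> 0 < prob C \<and> prob C < lam)"
    using large_atoms_exhaustion[OF lam_pos] by blast
  have bound: "AE \<omega> in M. norm (f x \<omega>) \<le> (\<Sum>i<n. indicator (A i) \<omega> * (2 / \<epsilon>) * normQ Q x \<omega>)"
    for x using supported_on_atoms[OF atoms exhaust, of x] pointwise_bound[of x]
  proof eventually_elim
    case (elim \<omega>)
    have terms_nonneg: "0 \<le> indicator (A i) \<omega> * (2 / \<epsilon>) * normQ Q x \<omega>" for i
      using eps_pos normQ_nonneg[OF finite_Q] by simp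
    show ?case
    proof (cases "f x \<omega> = 0")
      case False
      then obtain j where j: "j < n" "\<omega> \<in> A j" using elim by blast
      then have "norm (f x \<omega>) \<le> indicator (A j) \<omega> * (2 / \<epsilon>) * normQ Q x \<omega>" using elim by simp
      also have "\<dots> \<le> (\<Sum>i<n. indicator (A i) \<omega> * (2 / \<epsilon>) * normQ Q x \<omega>)"
        using j terms_nonneg by (intro member_le_sum) auto
      finally show ?thesis .
    next
      case True
      have "0 \<le> (\<Sum>i<n. indicator (A i) \<omega> * (2 / \<epsilon>) * normQ Q x \<omega>)"
        by (rule sum_nonneg) (rule terms_nonneg)
      then show ?thesis using True by simp
    qed
  qed
  show ?thesis using atoms bound by blast
qed

end

lemma (in prob_space) min_dual_imp_atom_dominated:
  fixes smul :: "('a \<Rightarrow> 'k::real_normed_field) \<Rightarrow> 'e::ab_group_add \<Rightarrow> 'e"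
    and f :: "'e \<Rightarrow> 'a \<Rightarrow> 'k"
  assumes semi: "\<forall>N\<in>Ps. L0_seminorm M smul N"
    and hom: "L0_hom M smul f"
    and cont: "in_min_dual M Ps f"
  shows "atom_dominated M Ps f"
proof -
  obtain Q \<epsilon> lam where Q: "finite Q" "Q \<subseteq> Ps" and pos: "0 < \<epsilon>" "0 < lam"
    and control: "\<forall>y. 1 - lam < prob {\<omega> \<in> space M. normQ Q y \<omega> < \<epsilon>} \<longrightarrow>
                        (AE \<omega> in M. norm (f y \<omega>) < 1)"
    using min_dual_imp_unit_ball_control[OF hom cont] by blast
  interpret unit_ball_control M smul f Q \<epsilon> lam
    using semi hom Q pos control by unfold_locales auto
  obtain n :: nat and A where "\<forall>i<n. P_atom M (A i)"
    and "\<forall>x. AE \<omega> in M. norm (f x \<omega>) \<le> (\<Sum>i<n. indicator (A i) \<omega> * (2 / \<epsilon>) * normQ Q x \<omega>)"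
    using dominated_on_atoms by blast
  then show ?thesis unfolding atom_dominated_def using Q pos
    by (intro exI[of _ n] exI[of _ A] exI[of _ "\<lambda>_ _. 2 / \<epsilon>"] exI[of _ "\<lambda>_. Q"]) auto
qed

theorem corollary3p1:
  fixes M :: "'a measure"
    and smul :: "('a \<Rightarrow> 'k::real_normed_field) \<Rightarrow> 'e::ab_group_add \<Rightarrow> 'e"
    and Ps :: "('e \<Rightarrow> 'a \<Rightarrow> real) set"
    and f :: "'e \<Rightarrow> 'a \<Rightarrow> 'k"
  assumes "prob_space M"
    and "random_lc_module M smul Ps"
    and "\<exists>A. P_atom M A"
    and "L0_hom M smul f"
  shows "in_min_dual M Ps f \<longleftrightarrow>
    (\<exists>(n::nat) A \<xi> Q.
       (\<forall>i<n. P_atom M (A i) \<and> \<xi> i \<in> borel_measurable M \<and> (AE \<omega> in M. 0 \<le> \<xi> i \<omega>) \<and>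
              finite (Q i) \<and> Q i \<subseteq> Ps) \<and>
       (\<forall>x. AE \<omega> in M. norm (f x \<omega>) \<le>
              (\<Sum>i<n. indicator (A i) \<omega> * \<xi> i \<omega> * normQ (Q i) x \<omega>)))"
proof -
  interpret prob_space M by fact
  have semi: "\<forall>N\<in>Ps. L0_seminorm M smul N"
    using \<open>random_lc_module M smul Ps\<close> by (simp add: random_lc_module_def)
  have "in_min_dual M Ps f \<longleftrightarrow> atom_dominated M Ps f"
    using min_dual_imp_atom_dominated[OF semi \<open>L0_hom M smul f\<close>]
      dominated_by_atoms_imp_min_dual[OF semi \<open>L0_hom M smul f\<close>] by blast
  then show ?thesis unfolding atom_dominated_def .
qed

end
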